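(* For each dimension $d$ there is a constant $\epsilon_d>0$ such that the following holds: if $f$ is a proper log-concave function on $\mathbb{R}^d$ with $\hbar$ as its John function, then $\|f\|_\infty\le e^d-\epsilon_d$.
   Context: A function $\mathbb{R}^d\to[0,\infty)$ is proper log-concave if it is upper semi-continuous, log-concave, with finite positive integral. The height function is $\hbar(x)=\sqrt{1-|x|^2}$ for $|x|\le1$ and $0$ otherwise. Positions of $\hbar$ are functions $\beta\,\hbar(Ax+a)$ with $A$ non-singular, $\beta>0$, $a\in\mathbb{R}^d$; "$\hbar$ is the John function of $f$" means $\hbar\le f$ pointwise and $\int g\le\int\hbar$ for every position $g$ of $\hbar$ with $g\le f$. $\|\cdot\|_\infty$ is the supremum norm. *)

theory Defs
  imports "HOL-Analysis.Analysis"
begin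

definition usc :: "('a::topological_space \<Rightarrow> real) \<Rightarrow> bool" where
  "usc f \<longleftrightarrow> (\<forall>t. open {x. f x < t})"

text \<open>Log-concavity of a nonnegative function (with the convention log 0 = -infinity).\<close>
definition log_concave :: "('a::real_vector \<Rightarrow> real) \<Rightarrow> bool" where
  "log_concave f \<longleftrightarrow>
     (\<forall>x y. \<forall>l\<in>{0<..<1::real}.
        f x powr (1 - l) * f y powr l \<le> f ((1 - l) *\<^sub>R x + l *\<^sub>R y))"

definition proper_log_concave :: "('a::euclidean_space \<Rightarrow> real) \<Rightarrow> bool" where
  "proper_log_concave f \<longleftrightarrow>
     (\<forall>x. 0 \<le> f x) \<and> usc f \<and> log_concave f \<and>
     f integrable_on UNIV \<and> 0 < integral UNIV f"

definition hbar :: "'a::euclidean_space \<Rightarrow> real" where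
  "hbar x = (if norm x \<le> 1 then sqrt (1 - (norm x)\<^sup>2) else 0)"

definition is_position_of_hbar :: "(real^'n \<Rightarrow> real) \<Rightarrow> bool" where
  "is_position_of_hbar g \<longleftrightarrow>
     (\<exists>(A::real^'n^'n) (\<beta>::real) (a::real^'n).
        invertible A \<and> 0 < \<beta> \<and> g = (\<lambda>x. \<beta> * hbar (A *v x + a)))"

definition hbar_is_John_function :: "(real^'n \<Rightarrow> real) \<Rightarrow> bool" where
  "hbar_is_John_function f \<longleftrightarrow>
     (\<forall>x. hbar x \<le> f x) \<and>
     (\<forall>g. is_position_of_hbar g \<and> (\<forall>x. g x \<le> f x) \<longrightarrow>
          integral UNIV g \<le> integral UNIV (hbar :: real^'n \<Rightarrow> real))"

end

theory Submission
  imports Defs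
begin

text \<open>
  Suppose \<open>f x\<^sub>0\<close> is close to \<open>e\<^sup>d\<close>; we exhibit a position of \<open>hbar\<close> below \<open>f\<close>
  with a larger integral than \<open>hbar\<close>.

  If \<open>x\<^sub>0\<close> is not far from the origin, log-concavity gives
  \<open>f ((1 - l) w + l x\<^sub>0) \<ge> hbar w powr (1 - l) * f x\<^sub>0 powr l\<close>. Away from the centre of
  the ball, \<open>hbar w \<le> exp (- |w|\<^sup>2 / 2)\<close> makes \<open>hbar w powr (- l)\<close> exceed a fixed
  factor \<open>exp \<delta>\<close>; near the centre one uses a convex combination with a larger weight
  on \<open>x\<^sub>0\<close>, and the extra power of \<open>f x\<^sub>0 \<ge> exp (1/2)\<close> provides the factor instead.
  So \<open>f\<close> dominates \<open>exp \<delta> * f x\<^sub>0 powr l * hbar ((x - l x\<^sub>0) / (1 - l))\<close>, whose integral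
  is \<open>exp \<delta> * f x\<^sub>0 powr l * (1 - l)\<^sup>d\<close> times that of \<open>hbar\<close>; for small \<open>l\<close> this factor
  exceeds 1 as soon as \<open>f x\<^sub>0 powr l\<close> comes close enough to \<open>exp (d l) \<approx> 1 / (1 - l)\<^sup>d\<close>.

  If \<open>x\<^sub>0\<close> is far from the origin and \<open>f x\<^sub>0 \<ge> 1\<close>, then \<open>f \<ge> 3/4\<close> on the convex hull
  of \<open>x\<^sub>0\<close> and the ball of radius \<open>1/2\<close>. This hull contains an ellipsoid with a long
  axis of length \<open>|x\<^sub>0| / 2\<close> towards \<open>x\<^sub>0\<close> and short axes \<open>1/4\<close>; half of its height
  function is a position below \<open>f\<close>, and counting disjoint cubes along the long axis
  shows that its integral exceeds \<open>2\<^sup>d \<ge> \<integral> hbar\<close>.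
\<close>

section \<open>Cubes and Henstock-Kurzweil integrals\<close>

lemma integrable_on_UNIV_if_bounded_support:
  fixes g :: "'a::euclidean_space \<Rightarrow> 'b::banach"
  assumes "continuous_on UNIV g" "bounded S" "\<And>x. x \<notin> S \<Longrightarrow> g x = 0"
  shows "g integrable_on UNIV"
proof -
  obtain a where "S \<subseteq> cbox (- a) a"
    using bounded_subset_cbox_symmetric[OF assms(2)] by blast
  moreover have "g integrable_on cbox (- a) a"
    using assms(1) by (auto intro: integrable_continuous continuous_on_subset)
  ultimately show ?thesis
    using assms(3) by (auto intro: integrable_on_superset)
qed

lemma has_integral_affinity_UNIV:
  fixes f :: "'a::euclidean_space \<Rightarrow> 'b::banach"
  assumes f: "(f has_integral i) (cbox a b)" and supp: "\<And>x. x \<notin> cbox a b \<Longrightarrow> f x = 0"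
    and m: "0 < m"
  shows "((\<lambda>x. f (m *\<^sub>R x + c)) has_integral i /\<^sub>R m ^ DIM('a)) UNIV"
proof (rule has_integral_on_superset[OF has_integral_affinity'[OF f m, of c]])
  fix x assume x: "x \<notin> cbox ((a - c) /\<^sub>R m) ((b - c) /\<^sub>R m)"
  have "m *\<^sub>R x + c \<notin> cbox a b"
  proof
    assume "m *\<^sub>R x + c \<in> cbox a b"
    then have "x \<in> cbox ((a - c) /\<^sub>R m) ((b - c) /\<^sub>R m)"
      using m by (auto simp: mem_box inner_diff_left algebra_simps divide_simps)
    with x show False ..
  qed
  then show "f (m *\<^sub>R x + c) = 0" by (rule supp)
qed auto

lemma norm_le_of_mem_cube:
  fixes c x :: "'a::euclidean_space" and h :: real
  assumes "x \<in> cbox (c - h *\<^sub>R One) (c + h *\<^sub>R One)"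
  shows "norm (x - c) \<le> DIM('a) * h"
proof -
  have "\<bar>(x - c) \<bullet> i\<bar> \<le> h" if "i \<in> Basis" for i
    using assms that by (auto simp: mem_box inner_diff_left inner_add_left abs_le_iff)
  then have "(\<Sum>i\<in>Basis. \<bar>(x - c) \<bullet> i\<bar>) \<le> (\<Sum>i\<in>(Basis::'a set). h)"
    by (intro sum_mono) auto
  then show ?thesis
    using norm_le_l1[of "x - c"] by simp
qed

lemma content_cube:
  fixes c :: "'a::euclidean_space" and h :: real
  assumes "0 \<le> h"
  shows "Henstock_Kurzweil_Integration.content (cbox (c - h *\<^sub>R One) (c + h *\<^sub>R One)) = (2 * h) ^ DIM('a)"
proof -
  have "c \<in> cbox (c - h *\<^sub>R One) (c + h *\<^sub>R One)"
    using assms by (simp add: mem_box inner_diff_left inner_add_left)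
  then show ?thesis
    by (subst content_cbox') (auto simp: inner_diff_left inner_add_left prod_constant)
qed

lemma integral_ge_sum_disjoint_cboxes:
  fixes g :: "'a::euclidean_space \<Rightarrow> real"
  assumes g: "g integrable_on UNIV" "\<And>x. 0 \<le> g x"
    and I: "finite I" "disjoint_family_on (\<lambda>k. cbox (a k) (b k)) I"
    and c: "\<And>k x. k \<in> I \<Longrightarrow> x \<in> cbox (a k) (b k) \<Longrightarrow> c \<le> g x"
  shows "c * (\<Sum>k\<in>I. Henstock_Kurzweil_Integration.content (cbox (a k) (b k))) \<le> integral UNIV g"
proof -
  let ?step = "\<lambda>x. \<Sum>k\<in>I. if x \<in> cbox (a k) (b k) then c else 0"
  have "((\<lambda>x. if x \<in> cbox (a k) (b k) then c else 0)
      has_integral c * Henstock_Kurzweil_Integration.content (cbox (a k) (b k))) UNIV" for k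
    using has_integral_const[of c "a k" "b k"] by (simp add: has_integral_restrict_UNIV mult.commute)
  then have "(?step has_integral (\<Sum>k\<in>I. c * Henstock_Kurzweil_Integration.content (cbox (a k) (b k)))) UNIV"
    by (intro has_integral_sum I(1))
  moreover have "?step x \<le> g x" for x
  proof (cases "\<exists>k\<in>I. x \<in> cbox (a k) (b k)")
    case True
    then obtain k where k: "k \<in> I" "x \<in> cbox (a k) (b k)" by blast
    then have "?step x = (\<Sum>j\<in>I. if j = k then c else 0)"
      using I(2) by (intro sum.cong) (auto simp: disjoint_family_on_def)
    with k I(1) c show ?thesis by simp
  qed (use g(2) in auto)
  ultimately show ?thesis
    using has_integral_le[OF _ integrable_integral[OF g(1)]] by (simp add: sum_distrib_left)
qed

lemma exists_Basis_abs_inner_ge: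
  fixes u :: "'a::euclidean_space"
  assumes "norm u = 1"
  obtains i where "i \<in> Basis" "1 / DIM('a) \<le> \<bar>u \<bullet> i\<bar>"
proof -
  have "\<not> (\<forall>i\<in>Basis. \<bar>u \<bullet> i\<bar> < 1 / DIM('a))"
  proof
    assume "\<forall>i\<in>Basis. \<bar>u \<bullet> i\<bar> < 1 / DIM('a)"
    then have "(\<Sum>i\<in>Basis. \<bar>u \<bullet> i\<bar>) < (\<Sum>i\<in>(Basis::'a set). 1 / DIM('a))"
      by (intro sum_strict_mono) auto
    with norm_le_l1[of u] assms show False by simp
  qed
  then obtain i where "i \<in> Basis" "\<not> \<bar>u \<bullet> i\<bar> < 1 / DIM('a)"
    by blast
  then show ?thesis
    using that[of i] by linarith
qed

lemma disjoint_family_cubes_on_line: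
  fixes c u :: "'a::euclidean_space"
  assumes i: "i \<in> Basis" and gap: "2 * h < \<bar>a * (u \<bullet> i)\<bar>"
  shows "disjoint_family_on
           (\<lambda>k::nat. cbox (c + (real k * a) *\<^sub>R u - h *\<^sub>R One) (c + (real k * a) *\<^sub>R u + h *\<^sub>R One)) UNIV"
  unfolding disjoint_family_on_def
proof (intro ballI impI equals0I)
  fix j k :: nat and x
  assume jk: "j \<noteq> k" and x: "x \<in> cbox (c + (real j * a) *\<^sub>R u - h *\<^sub>R One) (c + (real j * a) *\<^sub>R u + h *\<^sub>R One)
      \<inter> cbox (c + (real k * a) *\<^sub>R u - h *\<^sub>R One) (c + (real k * a) *\<^sub>R u + h *\<^sub>R One)"
  have "\<bar>x \<bullet> i - c \<bullet> i - real j * a * (u \<bullet> i)\<bar> \<le> h" "\<bar>x \<bullet> i - c \<bullet> i - real k * a * (u \<bullet> i)\<bar> \<le> h"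
    using x i by (auto simp: mem_box inner_add_left inner_diff_left abs_le_iff)
  then have "\<bar>real j - real k\<bar> * \<bar>a * (u \<bullet> i)\<bar> \<le> 2 * h"
    by (simp add: abs_mult[symmetric] left_diff_distrib abs_le_iff)
  moreover have "\<bar>a * (u \<bullet> i)\<bar> \<le> \<bar>real j - real k\<bar> * \<bar>a * (u \<bullet> i)\<bar>"
    using jk mult_right_mono[of 1 "\<bar>real j - real k\<bar>" "\<bar>a * (u \<bullet> i)\<bar>"] by simp
  ultimately show False
    using gap by linarith
qed

section \<open>The height function and its positions\<close>

lemma hbar_eq_sqrt_max: "hbar x = sqrt (max 0 (1 - (norm x)\<^sup>2))"
proof (cases "norm x \<le> 1")
  case True
  then have "(norm x)\<^sup>2 \<le> 1" by (simp add: power_le_one)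
  with True show ?thesis by (simp add: hbar_def)
next
  case False
  then have "1 < (norm x)\<^sup>2" by (simp add: one_less_power)
  with False show ?thesis by (simp add: hbar_def)
qed

lemma hbar_nonneg: "0 \<le> hbar x"
  by (simp add: hbar_eq_sqrt_max)

lemma hbar_le_one: "hbar x \<le> 1"
  by (simp add: hbar_eq_sqrt_max)

lemma hbar_eq_0: "1 \<le> norm x \<Longrightarrow> hbar x = 0"
  by (simp add: hbar_eq_sqrt_max power_le_one_iff abs_square_le_1)

lemma one_minus_norm_sq_le_hbar: "1 - (norm x)\<^sup>2 \<le> hbar x"
proof (cases "norm x \<le> 1")
  case True
  define y where "y = 1 - (norm x)\<^sup>2"
  have y: "0 \<le> y" "y \<le> 1"
    using True by (auto simp: y_def power_le_one)
  then have "sqrt (y\<^sup>2) \<le> sqrt y"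
    by (intro real_sqrt_le_mono) (simp add: power2_eq_square mult_left_le_one_le)
  with y True show ?thesis by (simp add: hbar_def y_def)
next
  case False
  then show ?thesis by (simp add: hbar_eq_0 one_less_power)
qed

lemma hbar_le_exp: "hbar x \<le> exp (- (norm x)\<^sup>2 / 2)"
proof -
  have "max 0 (1 - (norm x)\<^sup>2) \<le> exp (- (norm x)\<^sup>2)"
    using exp_ge_add_one_self[of "- (norm x)\<^sup>2"] by simp
  then have "hbar x \<le> sqrt (exp (- (norm x)\<^sup>2))"
    by (simp add: hbar_eq_sqrt_max)
  also have "exp (- (norm x)\<^sup>2) = (exp (- (norm x)\<^sup>2 / 2))\<^sup>2"
    by (simp add: exp_double[symmetric])
  finally show ?thesis by simp
qed

lemma continuous_on_hbar: "continuous_on S hbar"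
  unfolding hbar_eq_sqrt_max[abs_def] by (intro continuous_intros)

lemma hbar_eq_0_outside_cbox: "x \<notin> cbox (- One) One \<Longrightarrow> hbar x = 0"
proof -
  assume "x \<notin> cbox (- One) One"
  then obtain i where "i \<in> Basis" "1 < \<bar>x \<bullet> i\<bar>"
    by (auto simp: mem_box inner_minus_left)
  then show "hbar x = 0"
    using Basis_le_norm[of i x] by (intro hbar_eq_0) linarith
qed

lemma hbar_integrable: "hbar integrable_on UNIV"
  by (rule integrable_on_UNIV_if_bounded_support[OF continuous_on_hbar bounded_cbox])
    (rule hbar_eq_0_outside_cbox)

lemma has_integral_hbar_cbox:
  "(hbar has_integral integral UNIV (hbar :: 'a \<Rightarrow> real)) (cbox (- One) (One::'a::euclidean_space))"
proof -
  have "(\<lambda>x. if x \<in> cbox (- One) (One::'a) then hbar x else 0) = hbar"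
    by (rule ext) (simp add: hbar_eq_0_outside_cbox)
  then have "((\<lambda>x. if x \<in> cbox (- One) (One::'a) then hbar x else 0)
      has_integral integral UNIV (hbar :: 'a \<Rightarrow> real)) UNIV"
    using integrable_integral[OF hbar_integrable] by simp
  then show ?thesis
    by (simp only: has_integral_restrict_UNIV)
qed

lemma has_integral_hbar_affinity:
  assumes "0 < m"
  shows "((\<lambda>x::'a::euclidean_space. hbar (m *\<^sub>R x + c))
    has_integral integral UNIV (hbar :: 'a \<Rightarrow> real) / m ^ DIM('a)) UNIV"
  using has_integral_affinity_UNIV[OF has_integral_hbar_cbox hbar_eq_0_outside_cbox assms]
  by (simp add: divide_inverse_commute)

lemma integral_scaled_hbar_affinity:
  assumes "0 < m"
  shows "integral UNIV (\<lambda>x::'a::euclidean_space. \<beta> * hbar (m *\<^sub>R x + c))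
    = \<beta> * integral UNIV (hbar :: 'a \<Rightarrow> real) / m ^ DIM('a)"
  using integral_unique[OF has_integral_hbar_affinity[where 'a = 'a, OF assms]] by simp

lemma integral_hbar_le: "integral UNIV (hbar :: 'a::euclidean_space \<Rightarrow> real) \<le> 2 ^ DIM('a)"
proof -
  have "integral UNIV (hbar :: 'a \<Rightarrow> real) = integral (cbox (- One) (One::'a)) hbar"
    by (rule integral_unique[OF has_integral_hbar_cbox, symmetric])
  also have "\<dots> \<le> integral (cbox (- One) (One::'a)) (\<lambda>_. 1::real)"
    using has_integral_hbar_cbox hbar_le_one by (intro integral_le) auto
  also have "\<dots> = 2 ^ DIM('a)"
    using content_cube[of 1 "0::'a"] by simp
  finally show ?thesis .
qed

lemma integral_hbar_pos: "0 < integral UNIV (hbar :: 'a::euclidean_space \<Rightarrow> real)"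
proof -
  define h where "h = 1 / (2 * DIM('a))"
  let ?Q = "cbox (0 - h *\<^sub>R One) (0 + h *\<^sub>R (One::'a))"
  have "1/2 \<le> hbar x" if "x \<in> ?Q" for x
  proof -
    have "norm x \<le> 1/2"
      using norm_le_of_mem_cube[OF that] by (simp add: h_def)
    then have "(norm x)\<^sup>2 \<le> (1/2)\<^sup>2"
      by (intro power_mono) auto
    then show ?thesis
      using one_minus_norm_sq_le_hbar[of x] by (simp add: power2_eq_square)
  qed
  then have "1/2 * (\<Sum>k\<in>{0::nat}. Henstock_Kurzweil_Integration.content ?Q)
    \<le> integral UNIV (hbar :: 'a \<Rightarrow> real)"
    by (intro integral_ge_sum_disjoint_cboxes[OF hbar_integrable hbar_nonneg])
      (auto simp: disjoint_family_on_def)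
  moreover have "0 < Henstock_Kurzweil_Integration.content ?Q"
    by (subst content_cube) (auto simp: h_def)
  ultimately show ?thesis by simp
qed

lemma is_position_of_hbar_linear:
  fixes L :: "real^'n \<Rightarrow> real^'n"
  assumes L: "linear L" "\<And>x. L x = 0 \<Longrightarrow> x = 0" and \<beta>: "0 < \<beta>"
  shows "is_position_of_hbar (\<lambda>x. \<beta> * hbar (L x + a))"
proof -
  have A: "matrix L *v x = L x" for x
    using L(1) by (simp add: matrix_works)
  show ?thesis
    unfolding is_position_of_hbar_def
  proof (intro exI conjI)
    show "invertible (matrix L)"
      using L(2) by (simp add: invertible_left_inverse matrix_left_invertible_ker A)
    show "(\<lambda>x. \<beta> * hbar (L x + a)) = (\<lambda>x. \<beta> * hbar (matrix L *v x + a))"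
      by (simp add: A)
  qed (rule \<beta>)
qed

lemma is_position_of_hbar_rank_one:
  fixes u a :: "real^'n"
  assumes u: "u \<bullet> u = 1" and sk: "s \<noteq> 0" "s + k \<noteq> 0" and \<beta>: "0 < \<beta>"
  shows "is_position_of_hbar (\<lambda>x. \<beta> * hbar (s *\<^sub>R x + (k * (u \<bullet> x)) *\<^sub>R u + a))"
proof (rule is_position_of_hbar_linear[OF _ _ \<beta>])
  show "linear (\<lambda>x. s *\<^sub>R x + (k * (u \<bullet> x)) *\<^sub>R u)"
    by (auto simp: linear_iff algebra_simps inner_add_right)
next
  fix x :: "real^'n"
  assume x: "s *\<^sub>R x + (k * (u \<bullet> x)) *\<^sub>R u = 0"
  have "u \<bullet> (s *\<^sub>R x + (k * (u \<bullet> x)) *\<^sub>R u) = (s + k) * (u \<bullet> x)"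
    using u by (simp add: inner_add_right algebra_simps)
  with x have "(s + k) * (u \<bullet> x) = 0"
    by simp
  with x sk show "x = 0" by simp
qed

lemma is_position_of_hbar_integrable:
  fixes g :: "real^'n \<Rightarrow> real"
  assumes "is_position_of_hbar g"
  shows "g integrable_on UNIV"
proof -
  from assms obtain A :: "real^'n^'n" and \<beta> a where
    A: "invertible A" and g: "g = (\<lambda>x. \<beta> * hbar (A *v x + a))"
    unfolding is_position_of_hbar_def by blast
  from A obtain B :: "real^'n^'n" where "B ** A = mat 1"
    unfolding invertible_def by blast
  then have BA: "B *v (A *v x) = x" for x
    by (simp add: matrix_vector_mul_assoc)
  show ?thesis
  proof (rule integrable_on_UNIV_if_bounded_support)
    show "continuous_on UNIV g"
      unfolding g by (intro continuous_intros continuous_on_compose2[OF continuous_on_hbar]) auto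
    show "bounded ((*v) B ` cball (- a) 1)"
      by (intro bounded_linear_image bounded_cball matrix_vector_mul_bounded_linear)
    fix x assume "x \<notin> (*v) B ` cball (- a) 1"
    then have "A *v x \<notin> cball (- a) 1"
      using BA by (metis image_eqI)
    then have "1 \<le> norm (A *v x + a)"
      by (simp add: dist_norm norm_minus_commute[of "- a"])
    then have "hbar (A *v x + a) = 0"
      by (rule hbar_eq_0)
    then show "g x = 0"
      by (simp add: g)
  qed
qed

section \<open>Large values near the origin\<close>

lemma log_concave_lower_bound:
  assumes "log_concave f" "0 \<le> a" "a \<le> f y" "0 \<le> b" "b \<le> f x" "0 < t" "t < 1"
  shows "a powr (1 - t) * b powr t \<le> f ((1 - t) *\<^sub>R y + t *\<^sub>R x)"
proof -
  have "a powr (1 - t) * b powr t \<le> f y powr (1 - t) * f x powr t"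
    using assms by (intro mult_mono powr_mono2) auto
  also have "\<dots> \<le> f ((1 - t) *\<^sub>R y + t *\<^sub>R x)"
    using assms(1,6,7) unfolding log_concave_def by auto
  finally show ?thesis .
qed

lemma hbar_exp_le_powr:
  assumes "\<tau> \<le> (norm w)\<^sup>2" "0 \<le> l"
  shows "exp (l * \<tau> / 2) * hbar w \<le> hbar w powr (1 - l)"
proof (cases "hbar w = 0")
  case False
  then have h: "0 < hbar w"
    using hbar_nonneg[of w] by linarith
  have "ln (hbar w) \<le> ln (exp (- (norm w)\<^sup>2 / 2))"
    using hbar_le_exp[of w] h by (subst ln_le_cancel_iff) auto
  then have "ln (hbar w) \<le> - (norm w)\<^sup>2 / 2"
    by simp
  then have "l * ln (hbar w) \<le> l * (- \<tau> / 2)"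
    using assms by (intro mult_left_mono) auto
  then have "l * \<tau> / 2 \<le> - l * ln (hbar w)"
    by simp
  then have "exp (l * \<tau> / 2) \<le> hbar w powr (- l)"
    using h by (simp add: powr_def)
  moreover have "hbar w powr (1 - l) = hbar w powr (- l) * hbar w powr 1"
    using powr_add[of "hbar w" "- l" 1] by simp
  ultimately show ?thesis
    using h by (simp add: mult_right_mono)
qed simp

lemma one_plus_half_le_powr:
  fixes M \<mu> :: real
  assumes M: "exp (1/2) \<le> M" and \<mu>: "0 \<le> \<mu>"
  shows "1 + \<mu>/2 \<le> M powr \<mu>"
proof -
  have M0: "0 < M"
    using M exp_gt_zero[of "1/2"] by linarith
  then have "1/2 \<le> ln M"
    using M ln_le_cancel_iff[of "exp (1/2)" M] by simp
  then have "\<mu> * (1/2) \<le> \<mu> * ln M"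
    using \<mu> by (intro mult_left_mono) auto
  then have "exp (\<mu>/2) \<le> M powr \<mu>"
    using M0 by (simp add: powr_def mult.commute)
  then show ?thesis
    using exp_ge_add_one_self[of "\<mu>/2"] by linarith
qed

lemma near_center_shift_norm_sq_le:
  fixes w x0 :: "'a::real_normed_vector"
  assumes \<mu>: "0 < \<mu>" "\<mu> \<le> 1/4" "128 * \<mu> * (norm x0)\<^sup>2 \<le> 1"
    and l: "0 \<le> l" "l \<le> \<mu>/128" and w: "(norm w)\<^sup>2 \<le> \<mu>/128"
  shows "(norm ((1 / (1 - (l + \<mu>))) *\<^sub>R ((1 - l) *\<^sub>R w - \<mu> *\<^sub>R x0)))\<^sup>2 \<le> \<mu>/8"
proof -
  define v where "v = (1 - l) *\<^sub>R w - \<mu> *\<^sub>R x0"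
  have "(1 - l) * norm w \<le> norm w"
    using l \<mu> by (simp add: mult_left_le_one_le)
  then have v: "norm v \<le> norm w + \<mu> * norm x0"
    using norm_triangle_ineq4[of "(1 - l) *\<^sub>R w" "\<mu> *\<^sub>R x0"] l \<mu> by (simp add: v_def)
  have "norm ((1 / (1 - (l + \<mu>))) *\<^sub>R v) = norm v / (1 - (l + \<mu>))"
    using l \<mu> by simp
  also have "\<dots> \<le> 2 * norm v"
    using l \<mu> mult_left_mono[of 1 "2 * (1 - (l + \<mu>))" "norm v"]
    by (simp add: divide_le_eq algebra_simps)
  also have "\<dots> \<le> 2 * (norm w + \<mu> * norm x0)"
    using v by simp
  finally have "(norm ((1 / (1 - (l + \<mu>))) *\<^sub>R v))\<^sup>2 \<le> (2 * (norm w + \<mu> * norm x0))\<^sup>2"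
    by (rule power_mono) simp
  also have "\<dots> \<le> 8 * ((norm w)\<^sup>2 + \<mu> * (\<mu> * (norm x0)\<^sup>2))"
    using sum_squares_bound[of "norm w" "\<mu> * norm x0"]
    by (simp add: power2_eq_square algebra_simps)
  also have "\<dots> \<le> \<mu>/8"
  proof -
    have "\<mu> * (\<mu> * (norm x0)\<^sup>2) \<le> \<mu> * (1/128)"
      using \<mu> by (intro mult_left_mono) auto
    then show ?thesis
      using w by simp
  qed
  finally show ?thesis
    by (simp add: v_def)
qed

lemma near_center_lower_bound:
  fixes f :: "'a::euclidean_space \<Rightarrow> real"
  assumes lc: "log_concave f" and hb: "\<And>x. hbar x \<le> f x"
    and M: "exp (1/2) \<le> M" "M \<le> f x0"
    and \<mu>: "0 < \<mu>" "\<mu> \<le> 1/4" "128 * \<mu> * (norm x0)\<^sup>2 \<le> 1"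
    and l: "0 \<le> l" "l \<le> \<mu>/128" and w: "(norm w)\<^sup>2 \<le> \<mu>/128"
  shows "M powr l * (1 + \<mu>/4) \<le> f ((1 - l) *\<^sub>R w + l *\<^sub>R x0)"
proof -
  define t where "t = l + \<mu>"
  have t: "0 < t" "t \<le> 1/2"
    using l \<mu> by (auto simp: t_def)
  define y where "y = (1 / (1 - t)) *\<^sub>R ((1 - l) *\<^sub>R w - \<mu> *\<^sub>R x0)"
  have "(1 - t) *\<^sub>R y = (1 - l) *\<^sub>R w - \<mu> *\<^sub>R x0"
    using t by (simp add: y_def)
  then have z: "(1 - l) *\<^sub>R w + l *\<^sub>R x0 = (1 - t) *\<^sub>R y + t *\<^sub>R x0"
    by (simp add: t_def algebra_simps)
  have hy: "1 - \<mu>/8 \<le> hbar y"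
    using near_center_shift_norm_sq_le[OF \<mu> l w] one_minus_norm_sq_le_hbar[of y]
    by (simp add: y_def t_def)
  have "\<mu> * \<mu> \<le> 2 * \<mu>"
    using \<mu> by (intro mult_right_mono) auto
  moreover have "(1 - \<mu>/8) * (1 + \<mu>/2) = 1 + \<mu>/4 + \<mu>/8 - \<mu> * \<mu> / 16"
    by (simp add: field_simps)
  ultimately have "1 + \<mu>/4 \<le> (1 - \<mu>/8) * (1 + \<mu>/2)"
    by linarith
  also have "\<dots> \<le> hbar y * M powr \<mu>"
    using hy one_plus_half_le_powr[OF M(1)] \<mu> hbar_nonneg[of y] by (intro mult_mono) auto
  also have "\<dots> \<le> hbar y powr (1 - t) * M powr \<mu>"
    using powr_mono'[of "1 - t" 1 "hbar y"] hbar_nonneg[of y] hbar_le_one[of y] t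
    by (intro mult_right_mono) auto
  finally have "M powr l * (1 + \<mu>/4) \<le> M powr l * (hbar y powr (1 - t) * M powr \<mu>)"
    by (simp add: mult_left_mono)
  also have "\<dots> = hbar y powr (1 - t) * M powr t"
    by (simp add: t_def powr_add)
  also have "\<dots> \<le> f ((1 - t) *\<^sub>R y + t *\<^sub>R x0)"
    using M order_trans[OF exp_ge_zero M(1)] hb t
    by (intro log_concave_lower_bound[OF lc]) (auto simp: hbar_nonneg)
  finally show ?thesis
    by (simp only: z)
qed

lemma boosted_hbar_le:
  fixes f :: "'a::euclidean_space \<Rightarrow> real"
  assumes lc: "log_concave f" and hb: "\<And>x. hbar x \<le> f x"
    and M: "exp (1/2) \<le> M" "M \<le> f x0"
    and \<mu>: "0 < \<mu>" "\<mu> \<le> 1/4" "128 * \<mu> * (norm x0)\<^sup>2 \<le> 1"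
    and l: "0 < l" "l \<le> \<mu>/128"
  shows "M powr l * exp (l * \<mu> / 256) * hbar w \<le> f ((1 - l) *\<^sub>R w + l *\<^sub>R x0)"
proof (cases "\<mu>/128 \<le> (norm w)\<^sup>2")
  case True
  have "exp (l * \<mu> / 256) * hbar w \<le> hbar w powr (1 - l)"
    using hbar_exp_le_powr[OF True, of l] l by simp
  then have "M powr l * (exp (l * \<mu> / 256) * hbar w) \<le> M powr l * hbar w powr (1 - l)"
    by (rule mult_left_mono) simp
  then have "M powr l * exp (l * \<mu> / 256) * hbar w \<le> hbar w powr (1 - l) * M powr l"
    by (simp only: ac_simps)
  also have "\<dots> \<le> f ((1 - l) *\<^sub>R w + l *\<^sub>R x0)"
    using l \<mu> M order_trans[OF exp_ge_zero M(1)] hb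
    by (intro log_concave_lower_bound[OF lc]) (auto simp: hbar_nonneg)
  finally show ?thesis .
next
  case False
  have "exp (l * \<mu> / 256) \<le> 1 + 2 * (l * \<mu> / 256)"
    using exp_bound_lemma[of "l * \<mu> / 256"] mult_mono[of \<mu> 1 l 1] l \<mu> by simp
  also have "\<dots> \<le> 1 + \<mu>/4"
    using l \<mu> by (simp add: field_simps)
  moreover have "exp (l * \<mu> / 256) * hbar w \<le> exp (l * \<mu> / 256)"
    by (rule mult_right_le_one_le) (simp_all add: hbar_nonneg hbar_le_one)
  ultimately have "exp (l * \<mu> / 256) * hbar w \<le> 1 + \<mu>/4"
    by linarith
  then have "M powr l * exp (l * \<mu> / 256) * hbar w \<le> M powr l * (1 + \<mu>/4)"
    using mult_left_mono[of _ _ "M powr l"] by (simp add: mult.assoc)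
  also have "\<dots> \<le> f ((1 - l) *\<^sub>R w + l *\<^sub>R x0)"
    using near_center_lower_bound[OF lc hb M \<mu>, of l w] l False by simp
  finally show ?thesis .
qed

lemma boosted_position_le:
  fixes f :: "'a::euclidean_space \<Rightarrow> real"
  assumes lc: "log_concave f" and hb: "\<And>x. hbar x \<le> f x"
    and M: "exp (1/2) \<le> M" "M \<le> f x0"
    and \<mu>: "0 < \<mu>" "\<mu> \<le> 1/4" "128 * \<mu> * (norm x0)\<^sup>2 \<le> 1"
    and l: "0 < l" "l \<le> \<mu>/128"
  shows "M powr l * exp (l * \<mu> / 256) * hbar ((1 / (1 - l)) *\<^sub>R x + (- (l / (1 - l))) *\<^sub>R x0) \<le> f x"
proof -
  have "1 - l \<noteq> 0"
    using l \<mu> by simp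
  then have "(1 - l) *\<^sub>R ((1 / (1 - l)) *\<^sub>R x + (- (l / (1 - l))) *\<^sub>R x0) + l *\<^sub>R x0 = x"
    by (simp add: scaleR_add_right scaleR_diff_right)
  then show ?thesis
    using boosted_hbar_le[OF lc hb M \<mu> l, of "(1 / (1 - l)) *\<^sub>R x + (- (l / (1 - l))) *\<^sub>R x0"]
    by simp
qed

lemma exp_gain_exceeds_shrinkage:
  fixes n :: nat
  assumes n: "1 \<le> n" and \<mu>: "0 < \<mu>" "\<mu> \<le> 1/4"
  defines "l \<equiv> \<mu> / (2048 * n)"
  shows "1 < exp (l * (n - \<mu>/1024) + l * \<mu> / 256) * (1 - l) ^ n"
proof -
  have l: "0 < l" "l \<le> 1/2"
    using n \<mu> by (auto simp: l_def field_simps)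
  have "(1 - l) ^ n = exp (n * ln (1 - l))"
    using l by (simp add: exp_of_nat_mult)
  moreover have "n * (- l - 2 * l\<^sup>2) \<le> n * ln (1 - l)"
    using ln_one_minus_pos_lower_bound[of l] l by (intro mult_left_mono) auto
  moreover have "l * (n - \<mu>/1024) + l * \<mu> / 256 + n * (- l - 2 * l\<^sup>2) = l * \<mu> / 512"
    using n by (simp add: l_def power2_eq_square field_simps)
  ultimately have "l * \<mu> / 512 \<le> ln (exp (l * (n - \<mu>/1024) + l * \<mu> / 256) * (1 - l) ^ n)"
    by (simp add: ln_mult exp_add[symmetric])
  moreover have "0 < l * \<mu> / 512"
    using l \<mu> by simp
  moreover have "0 < exp (l * (n - \<mu>/1024) + l * \<mu> / 256) * (1 - l) ^ n"
    using l by simp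
  ultimately show ?thesis
    using ln_gt_zero_iff by fastforce
qed

lemma John_function_value_bound:
  fixes f :: "real^'n \<Rightarrow> real"
  assumes lc: "log_concave f" and John: "hbar_is_John_function f"
    and \<mu>: "0 < \<mu>" "\<mu> \<le> 1/4" "128 * \<mu> * (norm x0)\<^sup>2 \<le> 1"
  shows "f x0 < exp (CARD('n) - \<mu>/1024)"
proof (rule ccontr)
  define n where "n = CARD('n)"
  define M where "M = exp (n - \<mu>/1024)"
  define l where "l = \<mu> / (2048 * n)"
  define \<beta> where "\<beta> = M powr l * exp (l * \<mu> / 256)"
  define g where "g = (\<lambda>x. \<beta> * hbar ((1 / (1 - l)) *\<^sub>R x + (- (l / (1 - l))) *\<^sub>R x0))"
  have n: "1 \<le> n"
    by (simp add: n_def)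
  assume "\<not> f x0 < exp (CARD('n) - \<mu>/1024)"
  then have M: "exp (1/2) \<le> M" "M \<le> f x0"
    using n \<mu> by (simp_all add: M_def n_def[symmetric])
  have l: "0 < l" "l \<le> \<mu>/128" "l < 1"
    using n \<mu> by (auto simp: l_def field_simps)
  have hb: "hbar x \<le> f x" for x
    using John unfolding hbar_is_John_function_def by blast
  have "is_position_of_hbar g"
    unfolding g_def using l
    by (intro is_position_of_hbar_linear bounded_linear.linear[OF bounded_linear_scaleR_right])
      (auto simp: \<beta>_def M_def)
  moreover have "g x \<le> f x" for x
    unfolding g_def \<beta>_def by (rule boosted_position_le[OF lc hb M \<mu> l(1,2)])
  ultimately have "integral UNIV g \<le> integral UNIV (hbar :: real^'n \<Rightarrow> real)"
    using John unfolding hbar_is_John_function_def by blast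
  moreover have "integral UNIV g = \<beta> * (1 - l) ^ n * integral UNIV (hbar :: real^'n \<Rightarrow> real)"
    using integral_scaled_hbar_affinity[where 'a = "real^'n" and m = "1 / (1 - l)" and \<beta> = \<beta>
        and c = "(- (l / (1 - l))) *\<^sub>R x0"] l
    by (simp add: g_def n_def power_divide mult.commute)
  moreover have "1 < \<beta> * (1 - l) ^ n"
    using exp_gain_exceeds_shrinkage[OF n \<mu>(1,2)] \<mu>
    by (simp add: \<beta>_def M_def l_def powr_def exp_add mult.commute)
  ultimately show False
    using integral_hbar_pos[where 'a = "real^'n"] by simp
qed

section \<open>Large values far from the origin\<close>

lemma norm_rank_one_update_sq:
  fixes u z :: "'a::real_inner"
  assumes u: "u \<bullet> u = 1"
  shows "(norm (s *\<^sub>R z + (k * (u \<bullet> z)) *\<^sub>R u + c *\<^sub>R u))\<^sup>2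
    = s\<^sup>2 * (norm (z - (u \<bullet> z) *\<^sub>R u))\<^sup>2 + ((s + k) * (u \<bullet> z) + c)\<^sup>2"
proof -
  let ?p = "z - (u \<bullet> z) *\<^sub>R u" and ?t = "(s + k) * (u \<bullet> z) + c"
  have "s *\<^sub>R z + (k * (u \<bullet> z)) *\<^sub>R u + c *\<^sub>R u = s *\<^sub>R ?p + ?t *\<^sub>R u"
    by (simp add: algebra_simps)
  moreover have "orthogonal (s *\<^sub>R ?p) (?t *\<^sub>R u)"
    using u by (simp add: orthogonal_def inner_diff_right inner_commute)
  then have "(norm (s *\<^sub>R ?p + ?t *\<^sub>R u))\<^sup>2 = (norm (s *\<^sub>R ?p))\<^sup>2 + (norm (?t *\<^sub>R u))\<^sup>2"
    by (rule norm_add_Pythagorean)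
  moreover have "norm u = 1"
    using u by (simp add: norm_eq_sqrt_inner)
  ultimately show ?thesis
    by (simp add: power_mult_distrib)
qed

lemma norm_ellipsoid_map_sq:
  fixes u z :: "'a::real_inner"
  assumes u: "u \<bullet> u = 1"
  shows "(norm (4 *\<^sub>R z + ((4/R - 4) * (u \<bullet> z)) *\<^sub>R u - u))\<^sup>2
    = 16 * (norm (z - (u \<bullet> z) *\<^sub>R u))\<^sup>2 + (4 * (u \<bullet> z) / R - 1)\<^sup>2"
  using norm_rank_one_update_sq[OF u, of 4 z "4/R - 4" "-1"] by (simp add: algebra_simps)

lemma norm_ellipsoid_map_lt_one:
  fixes u z :: "'a::real_inner"
  assumes u: "u \<bullet> u = 1" and R: "0 < R"
    and W: "norm (4 *\<^sub>R z + ((4/R - 4) * (u \<bullet> z)) *\<^sub>R u - u) < 1"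
  shows "norm (z - (u \<bullet> z) *\<^sub>R u) < 1/4" "0 < u \<bullet> z" "u \<bullet> z < R/2"
proof -
  have "(norm (4 *\<^sub>R z + ((4/R - 4) * (u \<bullet> z)) *\<^sub>R u - u))\<^sup>2
      = (4 * norm (z - (u \<bullet> z) *\<^sub>R u))\<^sup>2 + (4 * (u \<bullet> z) / R - 1)\<^sup>2"
    using norm_ellipsoid_map_sq[OF u, of z R] by (simp add: power_mult_distrib)
  moreover have "(norm (4 *\<^sub>R z + ((4/R - 4) * (u \<bullet> z)) *\<^sub>R u - u))\<^sup>2 < 1"
    using W by (simp add: abs_square_less_1)
  ultimately have "(4 * norm (z - (u \<bullet> z) *\<^sub>R u))\<^sup>2 < 1" "(4 * (u \<bullet> z) / R - 1)\<^sup>2 < 1"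
    using zero_le_power2[of "4 * norm (z - (u \<bullet> z) *\<^sub>R u)"] zero_le_power2[of "4 * (u \<bullet> z) / R - 1"]
    by linarith+
  then have "\<bar>4 * norm (z - (u \<bullet> z) *\<^sub>R u)\<bar> < 1" "\<bar>4 * (u \<bullet> z) / R - 1\<bar> < 1"
    by (simp_all only: abs_square_less_1)
  then show "norm (z - (u \<bullet> z) *\<^sub>R u) < 1/4" "0 < u \<bullet> z" "u \<bullet> z < R/2"
    using R by (auto simp: abs_less_iff field_simps)
qed

lemma is_position_of_hbar_ellipsoid:
  fixes u :: "real^'n"
  assumes "u \<bullet> u = 1" "0 < R"
  shows "is_position_of_hbar (\<lambda>z. 1/2 * hbar (4 *\<^sub>R z + ((4/R - 4) * (u \<bullet> z)) *\<^sub>R u - u))"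
  using is_position_of_hbar_rank_one[OF assms(1), of 4 "4/R - 4" "1/2" "- u"] assms(2) by simp

lemma ellipsoid_position_le:
  fixes f :: "'a::euclidean_space \<Rightarrow> real"
  assumes lc: "log_concave f" and hb: "\<And>x. hbar x \<le> f x" and fx0: "1 \<le> f x0"
    and u: "u \<bullet> u = 1" and R: "0 < R" and x0: "x0 = R *\<^sub>R u"
  shows "1/2 * hbar (4 *\<^sub>R z + ((4/R - 4) * (u \<bullet> z)) *\<^sub>R u - u) \<le> f z"
proof (cases "norm (4 *\<^sub>R z + ((4/R - 4) * (u \<bullet> z)) *\<^sub>R u - u) < 1")
  case False
  then have "hbar (4 *\<^sub>R z + ((4/R - 4) * (u \<bullet> z)) *\<^sub>R u - u) = 0"
    by (intro hbar_eq_0) simp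
  then show ?thesis
    using hb[of z] hbar_nonneg[of z] by simp
next
  case True
  define p where "p = z - (u \<bullet> z) *\<^sub>R u"
  define \<theta> where "\<theta> = (u \<bullet> z) / R"
  note W = norm_ellipsoid_map_lt_one[OF u R True, folded p_def]
  have \<theta>: "0 < \<theta>" "\<theta> < 1/2"
    using W R by (auto simp: \<theta>_def field_simps)
  define y where "y = (1 / (1 - \<theta>)) *\<^sub>R p"
  have "(1 - \<theta>) *\<^sub>R y = p" "\<theta> *\<^sub>R x0 = (u \<bullet> z) *\<^sub>R u"
    using \<theta> R by (simp_all add: y_def \<theta>_def x0)
  then have z: "z = (1 - \<theta>) *\<^sub>R y + \<theta> *\<^sub>R x0"
    by (simp add: p_def)
  have "norm y = norm p / (1 - \<theta>)"
    using \<theta> by (simp add: y_def)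
  also have "\<dots> \<le> 1/2"
    using W \<theta> by (simp add: divide_le_eq)
  finally have "(norm y)\<^sup>2 \<le> (1/2)\<^sup>2"
    by (intro power_mono) auto
  then have "3/4 \<le> hbar y"
    using one_minus_norm_sq_le_hbar[of y] by (simp add: power_divide)
  also have "\<dots> \<le> hbar y powr (1 - \<theta>) * 1 powr \<theta>"
    using powr_mono'[of "1 - \<theta>" 1 "hbar y"] hbar_nonneg[of y] hbar_le_one[of y] \<theta> by simp
  also have "\<dots> \<le> f z"
    unfolding z using hb fx0 \<theta> by (intro log_concave_lower_bound[OF lc]) (auto simp: hbar_nonneg)
  finally show ?thesis
    using hbar_le_one[of "4 *\<^sub>R z + ((4/R - 4) * (u \<bullet> z)) *\<^sub>R u - u"] by linarith
qed

lemma ellipsoid_ge_on_cube: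
  fixes u z c :: "'a::euclidean_space"
  assumes u: "u \<bullet> u = 1" and R: "0 < R" and c: "c = (R/4 + t) *\<^sub>R u" and t: "\<bar>t\<bar> + 1/8 \<le> R/8"
    and z: "z \<in> cbox (c - (1 / (8 * DIM('a))) *\<^sub>R One) (c + (1 / (8 * DIM('a))) *\<^sub>R One)"
  shows "1/2 \<le> hbar (4 *\<^sub>R z + ((4/R - 4) * (u \<bullet> z)) *\<^sub>R u - u)"
proof -
  define e where "e = z - c"
  have e: "norm e \<le> 1/8"
    using norm_le_of_mem_cube[OF z] by (simp add: e_def)
  have "norm u = 1"
    using u by (simp add: norm_eq_sqrt_inner)
  then have ue: "\<bar>u \<bullet> e\<bar> \<le> 1/8"
    using Cauchy_Schwarz_ineq2[of u e] e by simp
  have uz: "u \<bullet> z = R/4 + t + u \<bullet> e"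
    using u by (simp add: e_def c inner_diff_right)
  have "z - (u \<bullet> z) *\<^sub>R u = (c + e) - (R/4 + t + u \<bullet> e) *\<^sub>R u"
    unfolding uz by (simp add: e_def)
  also have "\<dots> = e - (u \<bullet> e) *\<^sub>R u"
    by (simp add: c algebra_simps)
  finally have "(norm (z - (u \<bullet> z) *\<^sub>R u))\<^sup>2 \<le> (norm e)\<^sup>2"
    using norm_rank_one_update_sq[OF u, of 1 e 0 0] by simp
  also have "\<dots> \<le> 1/64"
    using e power_mono[of "norm e" "1/8" 2] by (simp add: power_divide)
  finally have p: "(norm (z - (u \<bullet> z) *\<^sub>R u))\<^sup>2 \<le> 1/64" .
  define s where "s = t + u \<bullet> e"
  have "\<bar>s\<bar> \<le> R/8"
    using t ue abs_triangle_ineq[of t "u \<bullet> e"] by (simp add: s_def)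
  moreover have "4 * (u \<bullet> z) / R - 1 = 4 * s / R"
    using R by (simp add: uz s_def field_simps)
  ultimately have "\<bar>4 * (u \<bullet> z) / R - 1\<bar> \<le> 1/2"
    using R by (simp add: abs_mult divide_le_eq)
  then have "(4 * (u \<bullet> z) / R - 1)\<^sup>2 \<le> 1/4"
    using power_mono[of "\<bar>4 * (u \<bullet> z) / R - 1\<bar>" "1/2" 2] by (simp add: power_divide)
  then have "(norm (4 *\<^sub>R z + ((4/R - 4) * (u \<bullet> z)) *\<^sub>R u - u))\<^sup>2 \<le> 1/2"
    using norm_ellipsoid_map_sq[OF u, of z R] p by linarith
  then show ?thesis
    using one_minus_norm_sq_le_hbar[of "4 *\<^sub>R z + ((4/R - 4) * (u \<bullet> z)) *\<^sub>R u - u"] by linarith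
qed

lemma integral_ellipsoid_position_ge:
  fixes u :: "real^'n"
  assumes u: "u \<bullet> u = 1" and R: "0 < R" and K: "4 * real K \<le> R"
  shows "real K / 4 * (1 / (4 * CARD('n))) ^ CARD('n)
    \<le> integral UNIV (\<lambda>z. 1/2 * hbar (4 *\<^sub>R z + ((4/R - 4) * (u \<bullet> z)) *\<^sub>R u - u))"
proof -
  define h :: real where "h = 1 / (8 * CARD('n))"
  let ?lo = "\<lambda>k::nat. (R/4) *\<^sub>R u + (real k * (1/2)) *\<^sub>R u - h *\<^sub>R One"
  let ?hi = "\<lambda>k::nat. (R/4) *\<^sub>R u + (real k * (1/2)) *\<^sub>R u + h *\<^sub>R One"
  have "real K / 4 * (1 / (4 * CARD('n))) ^ CARD('n)
      = 1/4 * (\<Sum>k\<in>{..<K}. Henstock_Kurzweil_Integration.content (cbox (?lo k) (?hi k)))"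
    using content_cube[where 'a = "real^'n", of h] by (simp add: h_def)
  also have "\<dots> \<le> integral UNIV (\<lambda>z. 1/2 * hbar (4 *\<^sub>R z + ((4/R - 4) * (u \<bullet> z)) *\<^sub>R u - u))"
  proof (rule integral_ge_sum_disjoint_cboxes[where a = ?lo and b = ?hi])
    show "(\<lambda>z. 1/2 * hbar (4 *\<^sub>R z + ((4/R - 4) * (u \<bullet> z)) *\<^sub>R u - u)) integrable_on UNIV"
      by (rule is_position_of_hbar_integrable[OF is_position_of_hbar_ellipsoid[OF u R]])
    obtain i where i: "i \<in> Basis" "1 / CARD('n) \<le> \<bar>u \<bullet> i\<bar>"
      using exists_Basis_abs_inner_ge[of u] u by (auto simp: norm_eq_sqrt_inner)
    then have "2 * h < \<bar>1/2 * (u \<bullet> i)\<bar>"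
      by (simp add: h_def abs_mult field_simps)
    from disjoint_family_cubes_on_line[OF i(1) this, of "(R/4) *\<^sub>R u"]
    show "disjoint_family_on (\<lambda>k. cbox (?lo k) (?hi k)) {..<K}"
      by (rule disjoint_family_on_mono[OF subset_UNIV])
    show "1/4 \<le> 1/2 * hbar (4 *\<^sub>R x + ((4/R - 4) * (u \<bullet> x)) *\<^sub>R u - u)"
      if "k \<in> {..<K}" "x \<in> cbox (?lo k) (?hi k)" for k x
    proof -
      have "real (k + 1) \<le> real K"
        using that(1) by simp
      then have "\<bar>real k / 2\<bar> + 1/8 \<le> R/8"
        using K by simp
      moreover have "(R/4) *\<^sub>R u + (real k * (1/2)) *\<^sub>R u = (R/4 + real k / 2) *\<^sub>R u"
        by (simp add: scaleR_add_left)
      moreover have "h = 1 / (8 * DIM(real^'n))"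
        by (simp add: h_def)
      ultimately show ?thesis
        using that(2) ellipsoid_ge_on_cube[OF u R, where t = "real k / 2"] by auto
    qed
  qed (simp_all add: hbar_nonneg)
  finally show ?thesis .
qed

lemma cube_count_exceeds:
  fixes n :: nat
  assumes "1 \<le> n"
  shows "2 ^ n < real (4 * (8 * n) ^ n + 1) / 4 * (1 / (4 * real n)) ^ n"
proof -
  define X where "X = (8 * real n) ^ n"
  define Y where "Y = (1 / (4 * real n)) ^ n"
  have "(8 * real n) * (1 / (4 * real n)) = 2"
    using assms by simp
  then have "X * Y = 2 ^ n"
    unfolding X_def Y_def by (metis power_mult_distrib)
  moreover have "0 < Y"
    using assms by (simp add: Y_def)
  moreover have "real (4 * (8 * n) ^ n + 1) / 4 * (1 / (4 * real n)) ^ n = X * Y + Y / 4"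
    by (simp add: X_def Y_def algebra_simps)
  ultimately show ?thesis
    by linarith
qed

text \<open>
  Along the long axis of the ellipsoid there is room for \<open>K = 4 (8 d)\<^sup>d + 1\<close> disjoint cubes
  of side \<open>1 / (4 d)\<close> on which its half height function is at least \<open>1/4\<close>, and
  \<open>K / 4 * (1 / (4 d))\<^sup>d > 2\<^sup>d\<close>.
\<close>
definition John_radius :: "nat \<Rightarrow> real" where
  "John_radius n = 4 * real (4 * (8 * n) ^ n + 1)"

lemma John_function_norm_bound:
  fixes f :: "real^'n \<Rightarrow> real"
  assumes lc: "log_concave f" and John: "hbar_is_John_function f" and fx0: "1 \<le> f x0"
  shows "norm x0 \<le> John_radius CARD('n)"
proof (rule ccontr)
  define n where "n = CARD('n)"
  define K where "K = 4 * (8 * n) ^ n + 1"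
  define R where "R = norm x0"
  define u where "u = (1 / R) *\<^sub>R x0"
  let ?g = "\<lambda>z. 1/2 * hbar (4 *\<^sub>R z + ((4/R - 4) * (u \<bullet> z)) *\<^sub>R u - u)"
  assume "\<not> norm x0 \<le> John_radius CARD('n)"
  then have RK: "4 * real K < R"
    by (simp add: John_radius_def R_def K_def n_def)
  then have R: "0 < R"
    using of_nat_0_le_iff[of K] by linarith
  have u: "u \<bullet> u = 1" and x0: "x0 = R *\<^sub>R u"
    using R by (simp_all add: u_def R_def dot_square_norm power2_eq_square)
  have "hbar x \<le> f x" for x
    using John unfolding hbar_is_John_function_def by blast
  then have "integral UNIV ?g \<le> integral UNIV (hbar :: real^'n \<Rightarrow> real)"
    using John is_position_of_hbar_ellipsoid[OF u R] ellipsoid_position_le[OF lc _ fx0 u R x0]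
    unfolding hbar_is_John_function_def by blast
  also have "\<dots> \<le> 2 ^ n"
    using integral_hbar_le[where 'a = "real^'n"] by (simp add: n_def)
  also have "\<dots> < real K / 4 * (1 / (4 * real n)) ^ n"
    using cube_count_exceeds[of n] by (simp add: K_def n_def)
  also have "\<dots> \<le> integral UNIV ?g"
    using integral_ellipsoid_position_ge[OF u R, of K] RK by (simp add: n_def)
  finally show False
    by simp
qed

definition John_gap :: "nat \<Rightarrow> real" where
  "John_gap n = 1 / (128 * ((John_radius n)\<^sup>2 + 1))"

lemma John_gap_pos: "0 < John_gap n"
  by (simp add: John_gap_def add_nonneg_pos)

lemma John_gap_le: "John_gap n \<le> 1/4"
proof -
  have "John_gap n \<le> 1/128"
    unfolding John_gap_def by (intro frac_le) auto
  then show ?thesis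
    by simp
qed

lemma John_function_value_lt:
  fixes f :: "real^'n \<Rightarrow> real"
  assumes lc: "log_concave f" and John: "hbar_is_John_function f"
  shows "f x < exp (CARD('n) - John_gap CARD('n) / 1024)"
proof (rule ccontr)
  assume fx: "\<not> f x < exp (CARD('n) - John_gap CARD('n) / 1024)"
  have "1 \<le> real CARD('n)"
    by simp
  then have "0 \<le> CARD('n) - John_gap CARD('n) / 1024"
    using John_gap_le[of "CARD('n)"] by linarith
  then have "1 \<le> exp (CARD('n) - John_gap CARD('n) / 1024)"
    by simp
  then have "1 \<le> f x"
    using fx by linarith
  then have "norm x \<le> John_radius CARD('n)"
    by (rule John_function_norm_bound[OF lc John])
  then have "(norm x)\<^sup>2 \<le> (John_radius CARD('n))\<^sup>2 + 1"
    using power_mono[of "norm x" "John_radius CARD('n)" 2] by simp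
  then have "128 * John_gap CARD('n) * (norm x)\<^sup>2 \<le> 1"
    by (simp add: John_gap_def pos_divide_le_eq add_nonneg_pos)
  then show False
    using John_function_value_bound[OF lc John John_gap_pos John_gap_le] fx by blast
qed

theorem lemma5p2:
  "\<exists>\<epsilon>>0. \<forall>f :: real^'n \<Rightarrow> real.
     proper_log_concave f \<and> hbar_is_John_function f \<longrightarrow>
     (\<forall>x. f x \<le> exp (real CARD('n)) - \<epsilon>)"
proof (intro exI conjI allI impI)
  let ?\<delta> = "John_gap CARD('n) / 1024"
  show "0 < exp (real CARD('n)) - exp (CARD('n) - ?\<delta>)"
    using John_gap_pos[of "CARD('n)"] by simp
  fix f :: "real^'n \<Rightarrow> real" and x
  assume "proper_log_concave f \<and> hbar_is_John_function f"
  then show "f x \<le> exp (real CARD('n)) - (exp (real CARD('n)) - exp (CARD('n) - ?\<delta>))"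
    using John_function_value_lt[of f x] by (simp add: proper_log_concave_def less_imp_le)
qed

end
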